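(* Let $\varepsilon\ge0$ and assume the continuity assumption holds. Define $H:\mathbb{R}_+^{2K}\to\mathbb{R}$ by $$H(\lambda^{(1)},\lambda^{(2)})=\sum_{s\in\{-1,1\}}\mathbb{E}\left[\max_{k\in[K]}\big(\pi_sp_k(X,s)-s(\lambda^{(1)}_k-\lambda^{(2)}_k)\big)\,\Big|\,S=s\right]+\varepsilon\sum_{k=1}^K(\lambda^{(1)}_k+\lambda^{(2)}_k),$$ and let $(\lambda^{*(1)},\lambda^{*(2)})\in\arg\min_{\mathbb{R}_+^{2K}}H$. Then a classifier $g^*$ satisfies $g^*\in\arg\min_{g\in\mathcal{G}_{\varepsilon\text{-fair}}}\mathcal{R}(g)$ if and only if $g^*\in\arg\min_{g\in\mathcal{G}}\mathcal{R}_{\lambda^{*(1)},\lambda^{*(2)}}(g)$. Moreover, the classifier $$g^*_{\varepsilon\text{-fair}}(x,s)=\arg\max_{k\in[K]}\big(\pi_sp_k(x,s)-s(\lambda^{*(1)}_k-\lambda^{*(2)}_k)\big)$$ is an optimal $\varepsilon$-fair classifier.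
   Context: $(X,S,Y)\sim\mathbb{P}$, $X\in\mathcal{X}\subset\mathbb{R}^d$, $S\in\{-1,1\}$, $Y\in[K]$, $\pi_s=\mathbb{P}(S=s)>0$, $p_k(x,s)=\mathbb{P}(Y=k\mid X=x,S=s)$. $\mathcal{G}$ is the set of measurable classifiers $g:\mathcal{X}\times\{-1,1\}\to[K]$, with risk $\mathcal{R}(g)=\mathbb{P}(g(X,S)\ne Y)$. Writing $D_k(g)=\mathbb{P}(g(X,S)=k\mid S=1)-\mathbb{P}(g(X,S)=k\mid S=-1)$, $g$ is $\varepsilon$-fair ($g\in\mathcal{G}_{\varepsilon\text{-fair}}$) if $|D_k(g)|\le\varepsilon$ for all $k\in[K]$. The $\varepsilon$-fair-risk is $\mathcal{R}_{\lambda^{(1)},\lambda^{(2)}}(g)=\mathcal{R}(g)+\sum_k\lambda^{(1)}_k[D_k(g)-\varepsilon]+\sum_k\lambda^{(2)}_k[-D_k(g)-\varepsilon]$ for $\lambda^{(1)},\lambda^{(2)}\in\mathbb{R}_+^K$. Continuity assumption: for all $k\neq j$ and $s$, $t\mapsto\mathbb{P}(p_k(X,S)-p_j(X,S)\le t\mid S=s)$ is continuous. *)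

theory Defs
  imports "HOL-Probability.Probability"
begin

text \<open>Probability setting: sample space M, X valued in a Euclidean space (playing R^d),
  S valued in {-1,1} (as int), Y valued in {1..K} (as nat).\<close>

definition piS :: "'a measure \<Rightarrow> ('a \<Rightarrow> int) \<Rightarrow> int \<Rightarrow> real" where
  "piS M S s = measure M {\<omega>\<in>space M. S \<omega> = s}"

definition cond_prob :: "'a measure \<Rightarrow> ('a \<Rightarrow> int) \<Rightarrow> int \<Rightarrow> 'a set \<Rightarrow> real" where
  "cond_prob M S s A = measure M (A \<inter> {\<omega>\<in>space M. S \<omega> = s}) / piS M S s"

definition cond_exp :: "'a measure \<Rightarrow> ('a \<Rightarrow> int) \<Rightarrow> int \<Rightarrow> ('a \<Rightarrow> real) \<Rightarrow> real" where
  "cond_exp M S s f = (\<integral>\<omega>. indicator {\<omega>\<in>space M. S \<omega> = s} \<omega> * f \<omega> \<partial>M) / piS M S s"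

definition classifiers :: "nat \<Rightarrow> ('x::euclidean_space \<Rightarrow> int \<Rightarrow> nat) set" where
  "classifiers K = {g. (\<forall>x. \<forall>s\<in>{-1, 1::int}. g x s \<in> {1..K}) \<and>
                       (\<forall>s\<in>{-1, 1::int}. (\<lambda>x. g x s) \<in> borel \<rightarrow>\<^sub>M count_space UNIV)}"

definition risk :: "'a measure \<Rightarrow> ('a \<Rightarrow> 'x) \<Rightarrow> ('a \<Rightarrow> int) \<Rightarrow> ('a \<Rightarrow> nat)
    \<Rightarrow> ('x \<Rightarrow> int \<Rightarrow> nat) \<Rightarrow> real" where
  "risk M X S Y g = measure M {\<omega>\<in>space M. g (X \<omega>) (S \<omega>) \<noteq> Y \<omega>}"

definition unfair :: "'a measure \<Rightarrow> ('a \<Rightarrow> 'x) \<Rightarrow> ('a \<Rightarrow> int)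
    \<Rightarrow> ('x \<Rightarrow> int \<Rightarrow> nat) \<Rightarrow> nat \<Rightarrow> real" where
  "unfair M X S g k =
     cond_prob M S 1 {\<omega>\<in>space M. g (X \<omega>) (S \<omega>) = k}
   - cond_prob M S (-1) {\<omega>\<in>space M. g (X \<omega>) (S \<omega>) = k}"

definition eps_fair :: "'a measure \<Rightarrow> ('a \<Rightarrow> 'x::euclidean_space) \<Rightarrow> ('a \<Rightarrow> int)
    \<Rightarrow> nat \<Rightarrow> real \<Rightarrow> ('x \<Rightarrow> int \<Rightarrow> nat) set" where
  "eps_fair M X S K eps = {g \<in> classifiers K. \<forall>k\<in>{1..K}. \<bar>unfair M X S g k\<bar> \<le> eps}"

definition fair_risk :: "'a measure \<Rightarrow> ('a \<Rightarrow> 'x) \<Rightarrow> ('a \<Rightarrow> int) \<Rightarrow> ('a \<Rightarrow> nat)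
    \<Rightarrow> nat \<Rightarrow> real \<Rightarrow> (nat \<Rightarrow> real) \<Rightarrow> (nat \<Rightarrow> real) \<Rightarrow> ('x \<Rightarrow> int \<Rightarrow> nat) \<Rightarrow> real" where
  "fair_risk M X S Y K eps l1 l2 g = risk M X S Y g
     + (\<Sum>k\<in>{1..K}. l1 k * (unfair M X S g k - eps))
     + (\<Sum>k\<in>{1..K}. l2 k * (- unfair M X S g k - eps))"

definition score :: "'a measure \<Rightarrow> ('a \<Rightarrow> int) \<Rightarrow> (nat \<Rightarrow> 'x \<Rightarrow> int \<Rightarrow> real)
    \<Rightarrow> (nat \<Rightarrow> real) \<Rightarrow> (nat \<Rightarrow> real) \<Rightarrow> nat \<Rightarrow> 'x \<Rightarrow> int \<Rightarrow> real" where
  "score M S p l1 l2 k x s = piS M S s * p k x s - real_of_int s * (l1 k - l2 k)"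

definition Hfun :: "'a measure \<Rightarrow> ('a \<Rightarrow> 'x) \<Rightarrow> ('a \<Rightarrow> int) \<Rightarrow> (nat \<Rightarrow> 'x \<Rightarrow> int \<Rightarrow> real)
    \<Rightarrow> nat \<Rightarrow> real \<Rightarrow> (nat \<Rightarrow> real) \<Rightarrow> (nat \<Rightarrow> real) \<Rightarrow> real" where
  "Hfun M X S p K eps l1 l2 =
     (\<Sum>s\<in>{-1, 1::int}. cond_exp M S s
         (\<lambda>\<omega>. Max ((\<lambda>k. score M S p l1 l2 k (X \<omega>) s) ` {1..K})))
     + eps * (\<Sum>k\<in>{1..K}. l1 k + l2 k)"

definition nonneg_vec :: "nat \<Rightarrow> (nat \<Rightarrow> real) \<Rightarrow> bool" where
  "nonneg_vec K l \<longleftrightarrow> (\<forall>k\<in>{1..K}. 0 \<le> l k)"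

definition fair_argmax :: "'a measure \<Rightarrow> ('a \<Rightarrow> int) \<Rightarrow> (nat \<Rightarrow> 'x \<Rightarrow> int \<Rightarrow> real)
    \<Rightarrow> nat \<Rightarrow> (nat \<Rightarrow> real) \<Rightarrow> (nat \<Rightarrow> real) \<Rightarrow> 'x \<Rightarrow> int \<Rightarrow> nat" where
  "fair_argmax M S p K l1 l2 x s =
     (LEAST k. k \<in> {1..K} \<and> (\<forall>j\<in>{1..K}. score M S p l1 l2 j x s \<le> score M S p l1 l2 k x s))"

text \<open>p is a version of the conditional probability P(Y = k | X = x, S = s).\<close>
definition is_cond_prob_version :: "'a measure \<Rightarrow> ('a \<Rightarrow> 'x::euclidean_space) \<Rightarrow> ('a \<Rightarrow> int)
    \<Rightarrow> ('a \<Rightarrow> nat) \<Rightarrow> nat \<Rightarrow> (nat \<Rightarrow> 'x \<Rightarrow> int \<Rightarrow> real) \<Rightarrow> bool" where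
  "is_cond_prob_version M X S Y K p \<longleftrightarrow>
     (\<forall>k\<in>{1..K}. \<forall>s\<in>{-1, 1::int}.
        (\<lambda>x. p k x s) \<in> borel_measurable borel \<and>
        (\<forall>x. 0 \<le> p k x s \<and> p k x s \<le> 1) \<and>
        (\<forall>B\<in>sets borel.
           measure M {\<omega>\<in>space M. X \<omega> \<in> B \<and> S \<omega> = s \<and> Y \<omega> = k}
           = (\<integral>\<omega>. indicator {\<omega>\<in>space M. X \<omega> \<in> B \<and> S \<omega> = s} \<omega> * p k (X \<omega>) s \<partial>M)))"

definition continuity_assumption :: "'a measure \<Rightarrow> ('a \<Rightarrow> 'x) \<Rightarrow> ('a \<Rightarrow> int)
    \<Rightarrow> nat \<Rightarrow> (nat \<Rightarrow> 'x \<Rightarrow> int \<Rightarrow> real) \<Rightarrow> bool" where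
  "continuity_assumption M X S K p \<longleftrightarrow>
     (\<forall>k\<in>{1..K}. \<forall>j\<in>{1..K}. k \<noteq> j \<longrightarrow> (\<forall>s\<in>{-1, 1::int}.
        continuous_on UNIV (\<lambda>t::real. cond_prob M S s
            {\<omega>\<in>space M. p k (X \<omega>) (S \<omega>) - p j (X \<omega>) (S \<omega>) \<le> t})))"

end

theory Submission
  imports Defs
begin

(* For a classifier g, with score_\<lambda>(k, x, s) = \<pi>_s p_k(x, s) - s (\<lambda>1_k - \<lambda>2_k), the fair risk is
   R_\<lambda>(g) = 1 - \<Sigma>_s E[score_\<lambda>(g(X, s), X, s) | S = s] - \<epsilon> \<Sigma>_k (\<lambda>1_k + \<lambda>2_k).
   Hence the score-argmax classifier g_\<lambda> minimises R_\<lambda> for every \<lambda>, and H(\<lambda>) = 1 - R_\<lambda>(g_\<lambda>).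
   By the continuity assumption two scores tie only on a null set, so g_\<lambda> is almost surely the
   unique minimiser of R_\<lambda> and D_k(g_\<lambda>) depends continuously on \<lambda>. As R_\<mu>(g) - R_\<lambda>(g) is
   linear in \<mu> - \<lambda>, minimality of H at its minimiser \<lambda>\<^sub>0 gives t (\<plusminus>D_k(g_\<mu>) - \<epsilon>) \<le> 0 for \<mu> = \<lambda>\<^sub>0 + t e_k
   (perturbing either multiplier), and letting t \<rightarrow> 0 from both sides yields |D_k(g_\<lambda>\<^sub>0)| \<le> \<epsilon> with
   complementary slackness. Thus R(g_\<lambda>\<^sub>0) = R_\<lambda>\<^sub>0(g_\<lambda>\<^sub>0) \<le> R_\<lambda>\<^sub>0(g) \<le> R(g) for every \<epsilon>-fair g,
   and almost sure uniqueness gives the converse. *)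

definition least_argmax :: "nat set \<Rightarrow> (nat \<Rightarrow> real) \<Rightarrow> nat" where
  "least_argmax I f = (LEAST k. k \<in> I \<and> (\<forall>j\<in>I. f j \<le> f k))"

lemma least_argmax_is_argmax:
  assumes "finite I" "I \<noteq> {}"
  shows "least_argmax I f \<in> I \<and> (\<forall>j\<in>I. f j \<le> f (least_argmax I f))"
proof -
  have "Max (f ` I) \<in> f ` I"
    using assms by simp
  then obtain k0 where k0: "k0 \<in> I" "f k0 = Max (f ` I)"
    by (metis imageE)
  then have "k0 \<in> I \<and> (\<forall>j\<in>I. f j \<le> f k0)"
    using assms by simp
  then show ?thesis
    unfolding least_argmax_def by (rule LeastI)
qed

lemma least_argmax_eqI:
  assumes "k0 \<in> I" and strict: "\<And>j. j \<in> I \<Longrightarrow> j \<noteq> k0 \<Longrightarrow> f j < f k0"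
  shows "least_argmax I f = k0"
  unfolding least_argmax_def
proof (rule Least_equality)
  show "k0 \<in> I \<and> (\<forall>j\<in>I. f j \<le> f k0)"
    using assms by force
  show "k0 \<le> k" if k: "k \<in> I \<and> (\<forall>j\<in>I. f j \<le> f k)" for k
  proof -
    have "\<not> f k < f k0"
      using k assms(1) by (simp add: not_less)
    then have "k = k0"
      using k strict by blast
    then show ?thesis
      by simp
  qed
qed

lemma eventually_least_argmax_eq:
  assumes "finite I" "k0 \<in> I"
    and strict: "\<And>j. j \<in> I \<Longrightarrow> j \<noteq> k0 \<Longrightarrow> f0 j < f0 k0"
    and lim: "\<And>j. j \<in> I \<Longrightarrow> ((\<lambda>n. f n j) \<longlongrightarrow> f0 j) F"
  shows "eventually (\<lambda>n. least_argmax I (f n) = k0) F"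
proof -
  have "eventually (\<lambda>n. f n j < f n k0) F" if j: "j \<in> I - {k0}" for j
  proof -
    have "((\<lambda>n. f n k0 - f n j) \<longlongrightarrow> f0 k0 - f0 j) F"
      using j assms(2) by (intro tendsto_diff lim) auto
    moreover have "0 < f0 k0 - f0 j"
      using j strict by simp
    ultimately have "eventually (\<lambda>n. 0 < f n k0 - f n j) F"
      by (rule order_tendstoD(1))
    then show ?thesis
      by eventually_elim simp
  qed
  then have "eventually (\<lambda>n. \<forall>j\<in>I - {k0}. f n j < f n k0) F"
    using assms(1) by (intro eventually_ball_finite) auto
  then show ?thesis
  proof eventually_elim
    case (elim n)
    then show ?case
      using assms(2) by (intro least_argmax_eqI) auto
  qed
qed

lemma measurable_least_argmax:
  assumes "finite I" and f: "\<And>k. k \<in> I \<Longrightarrow> (\<lambda>x. f k x) \<in> borel_measurable N"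
  shows "(\<lambda>x. least_argmax I (\<lambda>k. f k x)) \<in> N \<rightarrow>\<^sub>M count_space UNIV"
  unfolding least_argmax_def
proof (rule measurable_Least)
  fix i
  show "Measurable.pred N (\<lambda>x. i \<in> I \<and> (\<forall>j\<in>I. f j x \<le> f i x))"
  proof (cases "i \<in> I")
    case True
    have "Measurable.pred N (\<lambda>x. f j x \<le> f i x)" if "j \<in> I" for j
      unfolding pred_def using f[OF that] f[OF True] by (rule borel_measurable_le)
    then have "Measurable.pred N (\<lambda>x. \<forall>j\<in>I. f j x \<le> f i x)"
      using assms(1) by (rule pred_intros_finite(3)[rotated])
    with True show ?thesis
      by simp
  qed simp
qed

lemma (in finite_measure) level_set_null_if_isCont:
  fixes D :: "'a \<Rightarrow> real"
  assumes [measurable]: "D \<in> borel_measurable M" "A \<in> sets M"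
    and cont: "isCont (\<lambda>t. measure M ({\<omega>\<in>space M. D \<omega> \<le> t} \<inter> A)) c"
  shows "{\<omega>\<in>space M. D \<omega> = c} \<inter> A \<in> null_sets M"
proof -
  define G where "G t = measure M ({\<omega>\<in>space M. D \<omega> \<le> t} \<inter> A)" for t
  define N where "N = {\<omega>\<in>space M. D \<omega> = c} \<inter> A"
  have N_le: "measure M N \<le> G c - G (c - d)" if "0 < d" for d
  proof -
    let ?B = "\<lambda>t. {\<omega>\<in>space M. D \<omega> \<le> t} \<inter> A"
    have "N \<subseteq> ?B c - ?B (c - d)"
      using that unfolding N_def by auto
    then have "measure M N \<le> measure M (?B c - ?B (c - d))"
      by (intro finite_measure_mono) auto
    also have "\<dots> = G c - G (c - d)"
      using that unfolding G_def by (intro finite_measure_Diff) auto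
    finally show ?thesis .
  qed
  have "(\<lambda>n. c - inverse (real (Suc n))) \<longlonglongrightarrow> c - 0"
    by (intro tendsto_diff tendsto_const LIMSEQ_inverse_real_of_nat)
  then have "(\<lambda>n. G (c - inverse (real (Suc n)))) \<longlonglongrightarrow> G c"
    using isCont_tendsto_compose[OF cont] unfolding G_def by simp
  then have lim: "(\<lambda>n. G c - G (c - inverse (real (Suc n)))) \<longlonglongrightarrow> G c - G c"
    by (intro tendsto_diff tendsto_const)
  have "\<forall>n. measure M N \<le> G c - G (c - inverse (real (Suc n)))"
    using N_le by simp
  then have "measure M N \<le> 0"
    using LIMSEQ_le_const[OF lim, of "measure M N"] by simp
  then show ?thesis
    unfolding N_def by (intro null_setsI) (auto simp: emeasure_eq_measure measure_le_0_iff)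
qed

lemma (in finite_measure) tendsto_measure_if_AE_eventually_eq:
  assumes [measurable]: "\<And>n. A n \<in> sets M" "B \<in> sets M"
    and ev: "AE \<omega> in M. eventually (\<lambda>n. \<omega> \<in> A n \<longleftrightarrow> \<omega> \<in> B) sequentially"
  shows "(\<lambda>n. measure M (A n)) \<longlonglongrightarrow> measure M B"
proof -
  have "(\<lambda>n. integral\<^sup>L M (indicator (A n))) \<longlonglongrightarrow> (integral\<^sup>L M (indicator B) :: real)"
  proof (rule integral_dominated_convergence[where w="\<lambda>_. 1"])
    show "AE \<omega> in M. (\<lambda>n. indicator (A n) \<omega>) \<longlonglongrightarrow> (indicator B \<omega> :: real)"
      using ev
    proof eventually_elim
      case (elim \<omega>)
      then have "eventually (\<lambda>n. indicator (A n) \<omega> = (indicator B \<omega> :: real)) sequentially"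
        by (rule eventually_mono) (simp add: indicator_def)
      then show ?case
        by (rule tendsto_eventually)
    qed
    show "AE \<omega> in M. norm (indicator (A n) \<omega> :: real) \<le> 1" for n
      by (intro AE_I2) (simp add: indicator_def)
  qed simp_all
  then show ?thesis
    by (simp add: Int_absorb2 sets.sets_into_space)
qed

lemma (in finite_measure) sum_measure_partition:
  assumes "finite I" "\<And>\<omega>. \<omega> \<in> space M \<Longrightarrow> f \<omega> \<in> I"
    and "\<And>i. i \<in> I \<Longrightarrow> {\<omega>\<in>space M. f \<omega> = i \<and> P \<omega>} \<in> sets M"
  shows "(\<Sum>i\<in>I. measure M {\<omega>\<in>space M. f \<omega> = i \<and> P \<omega>}) = measure M {\<omega>\<in>space M. P \<omega>}"
proof -
  have "{\<omega>\<in>space M. P \<omega>} = (\<Union>i\<in>I. {\<omega>\<in>space M. f \<omega> = i \<and> P \<omega>})"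
    using assms(2) by auto
  moreover have "disjoint_family_on (\<lambda>i. {\<omega>\<in>space M. f \<omega> = i \<and> P \<omega>}) I"
    by (auto simp: disjoint_family_on_def)
  ultimately show ?thesis
    using assms(1,3) by (simp add: finite_measure_finite_Union image_subset_iff)
qed

lemma sum_fun_upd_mult:
  fixes l f :: "'b \<Rightarrow> real"
  assumes "finite I" "k \<in> I"
  shows "(\<Sum>j\<in>I. (l(k := v)) j * f j) = (\<Sum>j\<in>I. l j * f j) + (v - l k) * f k"
proof -
  have "(\<Sum>j\<in>I - {k}. (l(k := v)) j * f j) = (\<Sum>j\<in>I - {k}. l j * f j)"
    by (rule sum.cong) auto
  then have "(\<Sum>j\<in>I. (l(k := v)) j * f j) = v * f k + (\<Sum>j\<in>I - {k}. l j * f j)"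
    using assms by (simp add: sum.remove[of _ k])
  also have "\<dots> = (\<Sum>j\<in>I. l j * f j) + (v - l k) * f k"
    unfolding sum.remove[OF assms] by (simp add: algebra_simps)
  finally show ?thesis .
qed

lemma tendsto_fun_upd_add:
  fixes l :: "'b \<Rightarrow> real" and t :: "'c \<Rightarrow> real"
  assumes "(t \<longlongrightarrow> 0) F"
  shows "((\<lambda>n. (l(k := l k + t n)) j) \<longlongrightarrow> l j) F"
  using tendsto_add[OF tendsto_const[of "l k"] assms] by (cases "j = k") auto

lemma fair_risk_update_l1:
  assumes "k \<in> {1..K}"
  shows "fair_risk M X S Y K eps (l1(k := l1 k + t)) l2 g
    = fair_risk M X S Y K eps l1 l2 g + t * (unfair M X S g k - eps)"
  unfolding fair_risk_def sum_fun_upd_mult[OF finite_atLeastAtMost assms] by simp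

lemma fair_risk_update_l2:
  assumes "k \<in> {1..K}"
  shows "fair_risk M X S Y K eps l1 (l2(k := l2 k + t)) g
    = fair_risk M X S Y K eps l1 l2 g + t * (- unfair M X S g k - eps)"
  unfolding fair_risk_def sum_fun_upd_mult[OF finite_atLeastAtMost assms] by simp

lemma nonneg_vec_update:
  "nonneg_vec K l \<Longrightarrow> 0 \<le> l k + t \<Longrightarrow> nonneg_vec K (l(k := l k + t))"
  unfolding nonneg_vec_def by auto

lemma nonneg_add_scaled_inverse_Suc:
  fixes a c :: real
  assumes "0 \<le> c" "- c \<le> a"
  shows "0 \<le> c + a * inverse (real (Suc n))"
proof (cases "0 \<le> a")
  case False
  have "a * 1 \<le> a * inverse (real (Suc n))"
    using False by (intro mult_left_mono_neg) (simp_all add: field_simps)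
  with assms show ?thesis
    by simp
qed (use assms in simp)

locale fair_classification = prob_space M
  for M :: "'a measure" and X :: "'a \<Rightarrow> 'x::euclidean_space" and S :: "'a \<Rightarrow> int"
    and Y :: "'a \<Rightarrow> nat" and K :: nat and p :: "nat \<Rightarrow> 'x \<Rightarrow> int \<Rightarrow> real" +
  assumes X_measurable[measurable]: "X \<in> borel_measurable M"
    and S_measurable[measurable]: "S \<in> M \<rightarrow>\<^sub>M count_space UNIV"
    and Y_measurable[measurable]: "Y \<in> M \<rightarrow>\<^sub>M count_space UNIV"
    and S_values: "\<forall>\<omega>\<in>space M. S \<omega> \<in> {-1, 1}"
    and Y_values: "\<forall>\<omega>\<in>space M. Y \<omega> \<in> {1..K}"
    and group_prob_pos: "\<forall>s\<in>{-1, 1::int}. piS M S s > 0"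
    and p_version: "is_cond_prob_version M X S Y K p"
begin

lemma one_le_K: "1 \<le> K"
  using not_empty Y_values by fastforce

lemma piS_pos: "s \<in> {-1, 1} \<Longrightarrow> 0 < piS M S s"
  using group_prob_pos by auto

lemma
  assumes "k \<in> {1..K}" "s \<in> {-1, 1}"
  shows p_measurable: "(\<lambda>x. p k x s) \<in> borel_measurable borel"
    and p_nonneg: "0 \<le> p k x s"
    and p_le_1: "p k x s \<le> 1"
    and measure_eq_integral_p: "B \<in> sets borel \<Longrightarrow>
      measure M {\<omega>\<in>space M. X \<omega> \<in> B \<and> S \<omega> = s \<and> Y \<omega> = k}
        = (\<integral>\<omega>. indicator {\<omega>\<in>space M. X \<omega> \<in> B \<and> S \<omega> = s} \<omega> * p k (X \<omega>) s \<partial>M)"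
  using p_version assms unfolding is_cond_prob_version_def by auto

lemma measurable_at_S:
  assumes "(\<lambda>x. f x 1) \<in> borel \<rightarrow>\<^sub>M N" "(\<lambda>x. f x (-1)) \<in> borel \<rightarrow>\<^sub>M N"
  shows "(\<lambda>\<omega>. f (X \<omega>) (S \<omega>)) \<in> M \<rightarrow>\<^sub>M N"
proof -
  have "(\<lambda>\<omega>. if S \<omega> = 1 then f (X \<omega>) 1 else f (X \<omega>) (-1)) \<in> M \<rightarrow>\<^sub>M N"
    using assms by measurable
  then show ?thesis
    by (rule measurable_cong[THEN iffD1, rotated]) (use S_values in auto)
qed

lemma p_at_S_measurable[measurable]:
  "k \<in> {1..K} \<Longrightarrow> (\<lambda>\<omega>. p k (X \<omega>) (S \<omega>)) \<in> borel_measurable M"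
  by (intro measurable_at_S p_measurable) auto

lemma classifier_range: "g \<in> classifiers K \<Longrightarrow> s \<in> {-1, 1} \<Longrightarrow> g x s \<in> {1..K}"
  unfolding classifiers_def by auto

lemma classifier_measurable_at:
  "g \<in> classifiers K \<Longrightarrow> s \<in> {-1, 1} \<Longrightarrow> (\<lambda>\<omega>. g (X \<omega>) s) \<in> M \<rightarrow>\<^sub>M count_space UNIV"
  unfolding classifiers_def by (auto intro: measurable_compose[OF X_measurable])

lemma classifier_measurable:
  "g \<in> classifiers K \<Longrightarrow> (\<lambda>\<omega>. g (X \<omega>) (S \<omega>)) \<in> M \<rightarrow>\<^sub>M count_space UNIV"
  unfolding classifiers_def by (intro measurable_at_S) auto

lemma classifier_level_set_borel:
  assumes "g \<in> classifiers K" "s \<in> {-1, 1}"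
  shows "{x. g x s = k} \<in> sets borel"
proof -
  have "(\<lambda>x. g x s) \<in> borel \<rightarrow>\<^sub>M count_space UNIV"
    using assms unfolding classifiers_def by auto
  from measurable_sets[OF this, of "{k}"] show ?thesis
    by (simp add: vimage_def)
qed

lemma score_measurable:
  "k \<in> {1..K} \<Longrightarrow> s \<in> {-1, 1} \<Longrightarrow> (\<lambda>x. score M S p l1 l2 k x s) \<in> borel_measurable borel"
  unfolding score_def using p_measurable by measurable

lemma fair_argmax_eq_least_argmax:
  "fair_argmax M S p K l1 l2 x s = least_argmax {1..K} (\<lambda>k. score M S p l1 l2 k x s)"
  unfolding fair_argmax_def least_argmax_def ..

lemma fair_argmax_range: "fair_argmax M S p K l1 l2 x s \<in> {1..K}"
  using least_argmax_is_argmax[of "{1..K}" "\<lambda>k. score M S p l1 l2 k x s"] one_le_K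
  unfolding fair_argmax_eq_least_argmax by auto

lemma score_le_fair_argmax:
  "j \<in> {1..K} \<Longrightarrow> score M S p l1 l2 j x s \<le> score M S p l1 l2 (fair_argmax M S p K l1 l2 x s) x s"
  using least_argmax_is_argmax[of "{1..K}" "\<lambda>k. score M S p l1 l2 k x s"] one_le_K
  unfolding fair_argmax_eq_least_argmax by auto

lemma score_fair_argmax:
  "score M S p l1 l2 (fair_argmax M S p K l1 l2 x s) x s = Max ((\<lambda>k. score M S p l1 l2 k x s) ` {1..K})"
  using fair_argmax_range score_le_fair_argmax one_le_K
  by (intro antisym Max_ge Max.boundedI) auto

lemma fair_argmax_classifier: "fair_argmax M S p K l1 l2 \<in> classifiers K"
  unfolding classifiers_def
  using fair_argmax_range score_measurable
  by (auto simp: fair_argmax_eq_least_argmax intro!: measurable_least_argmax)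

lemma integrable_bounded:
  fixes f :: "'a \<Rightarrow> real"
  assumes "f \<in> borel_measurable M" "\<And>\<omega>. \<omega> \<in> space M \<Longrightarrow> \<bar>f \<omega>\<bar> \<le> B"
  shows "integrable M f"
  using assms by (intro integrable_const_bound[where B=B] AE_I2) auto

lemma sum_indicator_classifier:
  assumes "g \<in> classifiers K" "s \<in> {-1, 1}"
  shows "(\<Sum>k\<in>{1..K}. indicator {\<omega>\<in>space M. g (X \<omega>) s = k \<and> S \<omega> = s} \<omega> * h k)
    = indicator {\<omega>\<in>space M. S \<omega> = s} \<omega> * (h (g (X \<omega>) s) :: real)"
  using classifier_range[OF assms] by (auto simp: indicator_def)

lemma integral_group_score:
  assumes g: "g \<in> classifiers K" and s: "s \<in> {-1, 1}"
  shows "integrable M (\<lambda>\<omega>. indicator {\<omega>\<in>space M. S \<omega> = s} \<omega> * score M S p l1 l2 (g (X \<omega>) s) (X \<omega>) s)"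
    and "(\<integral>\<omega>. indicator {\<omega>\<in>space M. S \<omega> = s} \<omega> * score M S p l1 l2 (g (X \<omega>) s) (X \<omega>) s \<partial>M)
      = (\<Sum>k\<in>{1..K}. piS M S s * measure M {\<omega>\<in>space M. g (X \<omega>) s = k \<and> S \<omega> = s \<and> Y \<omega> = k}
          - of_int s * (l1 k - l2 k) * measure M {\<omega>\<in>space M. g (X \<omega>) s = k \<and> S \<omega> = s})"
proof -
  let ?A = "\<lambda>k. {\<omega>\<in>space M. g (X \<omega>) s = k \<and> S \<omega> = s}"
  have [measurable]: "(\<lambda>\<omega>. g (X \<omega>) s) \<in> M \<rightarrow>\<^sub>M count_space UNIV"
    using classifier_measurable_at[OF g s] .
  define a where "a k \<omega> = indicator (?A k) \<omega> * p k (X \<omega>) s" for k \<omega>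
  define h where "h k \<omega> = piS M S s * a k \<omega> - of_int s * (l1 k - l2 k) * indicator (?A k) \<omega>" for k \<omega>
  have pointwise: "indicator {\<omega>\<in>space M. S \<omega> = s} \<omega> * score M S p l1 l2 (g (X \<omega>) s) (X \<omega>) s
      = (\<Sum>k\<in>{1..K}. h k \<omega>)" for \<omega>
  proof -
    have "(\<Sum>k\<in>{1..K}. h k \<omega>) = (\<Sum>k\<in>{1..K}. indicator (?A k) \<omega> * score M S p l1 l2 k (X \<omega>) s)"
      by (intro sum.cong) (auto simp: h_def a_def score_def algebra_simps)
    also have "\<dots> = indicator {\<omega>\<in>space M. S \<omega> = s} \<omega> * score M S p l1 l2 (g (X \<omega>) s) (X \<omega>) s"
      by (rule sum_indicator_classifier[OF g s])
    finally show ?thesis ..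
  qed
  have h_integrable: "integrable M (h k)"
    and h_integral: "integral\<^sup>L M (h k) = piS M S s * measure M {\<omega>\<in>space M. g (X \<omega>) s = k \<and> S \<omega> = s \<and> Y \<omega> = k}
          - of_int s * (l1 k - l2 k) * measure M (?A k)"
    if k: "k \<in> {1..K}" for k
  proof -
    have [measurable]: "(\<lambda>x. p k x s) \<in> borel_measurable borel"
      using p_measurable[OF k s] .
    have a_integrable: "integrable M (a k)"
      unfolding a_def[abs_def]
      by (rule integrable_bounded[where B=1]) (auto simp: indicator_def p_nonneg[OF k s] p_le_1[OF k s])
    have "?A k \<in> sets M"
      by measurable
    moreover have "emeasure M (?A k) < \<infinity>"
      by (simp add: less_top[symmetric])
    ultimately have A_integrable: "integrable M (indicator (?A k) :: 'a \<Rightarrow> real)"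
      by (rule integrable_real_indicator)
    show "integrable M (h k)"
      unfolding h_def[abs_def] using a_integrable A_integrable by simp
    have "integral\<^sup>L M (a k) = measure M {\<omega>\<in>space M. g (X \<omega>) s = k \<and> S \<omega> = s \<and> Y \<omega> = k}"
      using measure_eq_integral_p[OF k s classifier_level_set_borel[OF g s]] by (simp add: a_def[abs_def])
    then show "integral\<^sup>L M (h k) = piS M S s * measure M {\<omega>\<in>space M. g (X \<omega>) s = k \<and> S \<omega> = s \<and> Y \<omega> = k}
          - of_int s * (l1 k - l2 k) * measure M (?A k)"
      unfolding h_def[abs_def] using a_integrable A_integrable \<open>?A k \<in> sets M\<close>
      by (simp add: Bochner_Integration.integral_diff)
  qed
  have "(\<integral>\<omega>. (\<Sum>k\<in>{1..K}. h k \<omega>) \<partial>M) = (\<Sum>k\<in>{1..K}. integral\<^sup>L M (h k))"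
    using h_integrable by (simp add: integral_sum)
  also have "\<dots> = (\<Sum>k\<in>{1..K}. piS M S s * measure M {\<omega>\<in>space M. g (X \<omega>) s = k \<and> S \<omega> = s \<and> Y \<omega> = k}
          - of_int s * (l1 k - l2 k) * measure M {\<omega>\<in>space M. g (X \<omega>) s = k \<and> S \<omega> = s})"
    using h_integral by (intro sum.cong) simp_all
  finally show "(\<integral>\<omega>. indicator {\<omega>\<in>space M. S \<omega> = s} \<omega> * score M S p l1 l2 (g (X \<omega>) s) (X \<omega>) s \<partial>M)
      = (\<Sum>k\<in>{1..K}. piS M S s * measure M {\<omega>\<in>space M. g (X \<omega>) s = k \<and> S \<omega> = s \<and> Y \<omega> = k}
          - of_int s * (l1 k - l2 k) * measure M {\<omega>\<in>space M. g (X \<omega>) s = k \<and> S \<omega> = s})"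
    unfolding pointwise .
  show "integrable M (\<lambda>\<omega>. indicator {\<omega>\<in>space M. S \<omega> = s} \<omega> * score M S p l1 l2 (g (X \<omega>) s) (X \<omega>) s)"
    unfolding pointwise using h_integrable by (intro Bochner_Integration.integrable_sum) auto
qed

lemma correct_set_measurable:
  assumes "g \<in> classifiers K"
  shows "{\<omega>\<in>space M. g (X \<omega>) (S \<omega>) = Y \<omega>} \<in> sets M"
proof -
  have [measurable]: "(\<lambda>\<omega>. g (X \<omega>) (S \<omega>)) \<in> M \<rightarrow>\<^sub>M count_space UNIV"
    using classifier_measurable[OF assms] .
  have "{\<omega>\<in>space M. g (X \<omega>) (S \<omega>) = Y \<omega>} = {\<omega>\<in>space M. \<exists>k. g (X \<omega>) (S \<omega>) = k \<and> Y \<omega> = k}"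
    by auto
  also have "\<dots> \<in> sets M"
    by measurable
  finally show ?thesis .
qed

lemma risk_eq_1_minus_sum_correct:
  assumes g: "g \<in> classifiers K"
  shows "risk M X S Y g
    = 1 - (\<Sum>s\<in>{-1, 1::int}. \<Sum>k\<in>{1..K}. measure M {\<omega>\<in>space M. g (X \<omega>) s = k \<and> S \<omega> = s \<and> Y \<omega> = k})"
proof -
  have correct: "{\<omega>\<in>space M. g (X \<omega>) (S \<omega>) = Y \<omega>} \<in> sets M"
    using correct_set_measurable[OF g] .
  have "(\<Sum>s\<in>{-1, 1::int}. \<Sum>k\<in>{1..K}. measure M {\<omega>\<in>space M. g (X \<omega>) s = k \<and> S \<omega> = s \<and> Y \<omega> = k})
    = (\<Sum>i\<in>{-1, 1} \<times> {1..K}. measure M {\<omega>\<in>space M. (S \<omega>, Y \<omega>) = i \<and> g (X \<omega>) (S \<omega>) = Y \<omega>})"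
    unfolding sum.cartesian_product by (intro sum.cong refl) (auto intro!: arg_cong[where f="measure M"])
  also have "\<dots> = prob {\<omega>\<in>space M. g (X \<omega>) (S \<omega>) = Y \<omega>}"
  proof (rule sum_measure_partition)
    fix i :: "int \<times> nat"
    have "{\<omega>\<in>space M. (S \<omega>, Y \<omega>) = i \<and> g (X \<omega>) (S \<omega>) = Y \<omega>}
      = {\<omega>\<in>space M. S \<omega> = fst i \<and> Y \<omega> = snd i} \<inter> {\<omega>\<in>space M. g (X \<omega>) (S \<omega>) = Y \<omega>}"
      by auto
    also have "\<dots> \<in> sets M"
      using correct by measurable
    finally show "{\<omega>\<in>space M. (S \<omega>, Y \<omega>) = i \<and> g (X \<omega>) (S \<omega>) = Y \<omega>} \<in> sets M" .
  qed (use S_values Y_values in auto)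
  also have "\<dots> = 1 - risk M X S Y g"
  proof -
    have "{\<omega>\<in>space M. g (X \<omega>) (S \<omega>) \<noteq> Y \<omega>} = space M - {\<omega>\<in>space M. g (X \<omega>) (S \<omega>) = Y \<omega>}"
      by auto
    then show ?thesis
      unfolding risk_def using prob_compl[OF correct] by simp
  qed
  finally show ?thesis
    by simp
qed



lemma unfair_eq:
  "unfair M X S g k = measure M {\<omega>\<in>space M. g (X \<omega>) 1 = k \<and> S \<omega> = 1} / piS M S 1
    - measure M {\<omega>\<in>space M. g (X \<omega>) (-1) = k \<and> S \<omega> = -1} / piS M S (-1)"
proof -
  have "{\<omega>\<in>space M. g (X \<omega>) (S \<omega>) = k} \<inter> {\<omega>\<in>space M. S \<omega> = s} = {\<omega>\<in>space M. g (X \<omega>) s = k \<and> S \<omega> = s}" for s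
    by auto
  then show ?thesis
    unfolding unfair_def cond_prob_def by simp
qed

lemma sum_cond_exp_score:
  assumes g: "g \<in> classifiers K"
  shows "(\<Sum>s\<in>{-1, 1::int}. cond_exp M S s (\<lambda>\<omega>. score M S p l1 l2 (g (X \<omega>) s) (X \<omega>) s))
    = 1 - risk M X S Y g - (\<Sum>k\<in>{1..K}. (l1 k - l2 k) * unfair M X S g k)"
proof -
  let ?C = "\<lambda>s k. measure M {\<omega>\<in>space M. g (X \<omega>) s = k \<and> S \<omega> = s \<and> Y \<omega> = k}"
  let ?A = "\<lambda>s k. measure M {\<omega>\<in>space M. g (X \<omega>) s = k \<and> S \<omega> = s}"
  have cond_exp_eq: "cond_exp M S s (\<lambda>\<omega>. score M S p l1 l2 (g (X \<omega>) s) (X \<omega>) s)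
      = (\<Sum>k\<in>{1..K}. ?C s k) - of_int s * (\<Sum>k\<in>{1..K}. (l1 k - l2 k) * ?A s k) / piS M S s"
    if s: "s \<in> {-1, 1}" for s
  proof -
    have "(\<integral>\<omega>. indicator {\<omega>\<in>space M. S \<omega> = s} \<omega> * score M S p l1 l2 (g (X \<omega>) s) (X \<omega>) s \<partial>M)
        = piS M S s * (\<Sum>k\<in>{1..K}. ?C s k) - of_int s * (\<Sum>k\<in>{1..K}. (l1 k - l2 k) * ?A s k)"
      unfolding integral_group_score(2)[OF g s] by (simp add: sum_subtractf sum_distrib_left mult.assoc)
    then show ?thesis
      using piS_pos[OF s] by (simp add: cond_exp_def diff_divide_distrib)
  qed
  have "(\<Sum>k\<in>{1..K}. (l1 k - l2 k) * unfair M X S g k)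
      = (\<Sum>k\<in>{1..K}. (l1 k - l2 k) * ?A 1 k) / piS M S 1 - (\<Sum>k\<in>{1..K}. (l1 k - l2 k) * ?A (-1) k) / piS M S (-1)"
    unfolding unfair_eq by (simp add: right_diff_distrib sum_subtractf sum_divide_distrib)
  then show ?thesis
    using cond_exp_eq[of 1] cond_exp_eq[of "-1"] risk_eq_1_minus_sum_correct[OF g] by simp
qed

lemma fair_risk_eq_cond_exp_score:
  assumes g: "g \<in> classifiers K"
  shows "fair_risk M X S Y K eps l1 l2 g
    = 1 - ((\<Sum>s\<in>{-1, 1::int}. cond_exp M S s (\<lambda>\<omega>. score M S p l1 l2 (g (X \<omega>) s) (X \<omega>) s))
           + eps * (\<Sum>k\<in>{1..K}. l1 k + l2 k))"
proof -
  let ?D = "unfair M X S g"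
  have "(\<Sum>k\<in>{1..K}. l1 k * (?D k - eps)) + (\<Sum>k\<in>{1..K}. l2 k * (- ?D k - eps))
      = (\<Sum>k\<in>{1..K}. (l1 k - l2 k) * ?D k - eps * (l1 k + l2 k))"
    unfolding sum.distrib[symmetric] by (intro sum.cong) (auto simp: algebra_simps)
  also have "\<dots> = (\<Sum>k\<in>{1..K}. (l1 k - l2 k) * ?D k) - eps * (\<Sum>k\<in>{1..K}. l1 k + l2 k)"
    by (simp add: sum_subtractf sum_distrib_left)
  finally show ?thesis
    unfolding fair_risk_def sum_cond_exp_score[OF g] by simp
qed

lemma cond_exp_mono:
  assumes s: "s \<in> {-1, 1}"
    and "integrable M (\<lambda>\<omega>. indicator {\<omega>\<in>space M. S \<omega> = s} \<omega> * f \<omega>)"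
    and "integrable M (\<lambda>\<omega>. indicator {\<omega>\<in>space M. S \<omega> = s} \<omega> * h \<omega>)"
    and "\<And>\<omega>. \<omega> \<in> space M \<Longrightarrow> f \<omega> \<le> h \<omega>"
  shows "cond_exp M S s f \<le> cond_exp M S s h"
  unfolding cond_exp_def using assms piS_pos[OF s]
  by (intro divide_right_mono integral_mono) (auto simp: indicator_def)

lemma AE_eq_if_cond_exp_eq:
  assumes s: "s \<in> {-1, 1}"
    and f: "integrable M (\<lambda>\<omega>. indicator {\<omega>\<in>space M. S \<omega> = s} \<omega> * f \<omega>)"
    and h: "integrable M (\<lambda>\<omega>. indicator {\<omega>\<in>space M. S \<omega> = s} \<omega> * h \<omega>)"
    and le: "\<And>\<omega>. \<omega> \<in> space M \<Longrightarrow> f \<omega> \<le> h \<omega>"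
    and eq: "cond_exp M S s f = cond_exp M S s h"
  shows "AE \<omega> in M. S \<omega> = s \<longrightarrow> f \<omega> = h \<omega>"
proof -
  let ?I = "indicator {\<omega>\<in>space M. S \<omega> = s} :: 'a \<Rightarrow> real"
  let ?d = "\<lambda>\<omega>. ?I \<omega> * h \<omega> - ?I \<omega> * f \<omega>"
  have d_integrable: "integrable M ?d"
    using f h by (rule Bochner_Integration.integrable_diff[rotated])
  have "integral\<^sup>L M ?d = 0"
    using eq piS_pos[OF s] unfolding cond_exp_def by (simp add: Bochner_Integration.integral_diff[OF h f])
  moreover have d_nonneg: "AE \<omega> in M. 0 \<le> ?d \<omega>"
    using le by (intro AE_I2) (auto simp: indicator_def)
  ultimately have "AE \<omega> in M. ?d \<omega> = 0"
    using integral_nonneg_eq_0_iff_AE[OF d_integrable d_nonneg] by simp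
  with AE_space show ?thesis
    by eventually_elim (auto simp: indicator_def)
qed

lemma cond_exp_score_le_fair_argmax:
  assumes g: "g \<in> classifiers K" and s: "s \<in> {-1, 1}"
  shows "cond_exp M S s (\<lambda>\<omega>. score M S p l1 l2 (g (X \<omega>) s) (X \<omega>) s)
    \<le> cond_exp M S s (\<lambda>\<omega>. score M S p l1 l2 (fair_argmax M S p K l1 l2 (X \<omega>) s) (X \<omega>) s)"
  using integral_group_score(1)[OF g s] integral_group_score(1)[OF fair_argmax_classifier s]
    classifier_range[OF g s]
  by (intro cond_exp_mono[OF s]) (auto intro: score_le_fair_argmax)

lemma fair_argmax_minimises_fair_risk:
  assumes g: "g \<in> classifiers K"
  shows "fair_risk M X S Y K eps l1 l2 (fair_argmax M S p K l1 l2) \<le> fair_risk M X S Y K eps l1 l2 g"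
  unfolding fair_risk_eq_cond_exp_score[OF g] fair_risk_eq_cond_exp_score[OF fair_argmax_classifier]
  using cond_exp_score_le_fair_argmax[OF g, of 1 l1 l2] cond_exp_score_le_fair_argmax[OF g, of "-1" l1 l2]
  by simp

lemma Hfun_eq_fair_risk_fair_argmax:
  "Hfun M X S p K eps l1 l2 = 1 - fair_risk M X S Y K eps l1 l2 (fair_argmax M S p K l1 l2)"
  unfolding Hfun_def fair_risk_eq_cond_exp_score[OF fair_argmax_classifier] score_fair_argmax by simp

lemma fair_risk_le_if_Hfun_le:
  assumes "Hfun M X S p K eps l1 l2 \<le> Hfun M X S p K eps m1 m2"
  shows "fair_risk M X S Y K eps m1 m2 (fair_argmax M S p K m1 m2)
    \<le> fair_risk M X S Y K eps l1 l2 (fair_argmax M S p K m1 m2)"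
  using assms fair_argmax_minimises_fair_risk[OF fair_argmax_classifier, of eps l1 l2 m1 m2]
  by (simp add: Hfun_eq_fair_risk_fair_argmax)

lemma
  assumes g: "g \<in> classifiers K" and h: "h \<in> classifiers K"
    and ae: "AE \<omega> in M. g (X \<omega>) (S \<omega>) = h (X \<omega>) (S \<omega>)"
  shows risk_AE_cong: "risk M X S Y g = risk M X S Y h"
    and unfair_AE_cong: "unfair M X S g k = unfair M X S h k"
proof -
  have [measurable]: "(\<lambda>\<omega>. g (X \<omega>) (S \<omega>)) \<in> M \<rightarrow>\<^sub>M count_space UNIV"
    "(\<lambda>\<omega>. h (X \<omega>) (S \<omega>)) \<in> M \<rightarrow>\<^sub>M count_space UNIV"
    using classifier_measurable g h by auto
  have "{\<omega>\<in>space M. f (X \<omega>) (S \<omega>) \<noteq> Y \<omega>} = space M - {\<omega>\<in>space M. f (X \<omega>) (S \<omega>) = Y \<omega>}" for f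
    by auto
  then have "{\<omega>\<in>space M. f (X \<omega>) (S \<omega>) \<noteq> Y \<omega>} \<in> sets M" if "f \<in> classifiers K" for f
    using correct_set_measurable[OF that] by auto
  then show "risk M X S Y g = risk M X S Y h"
    unfolding risk_def using ae g h by (intro measure_eq_AE) auto
  have "measure M ({\<omega>\<in>space M. g (X \<omega>) (S \<omega>) = k} \<inter> {\<omega>\<in>space M. S \<omega> = s})
      = measure M ({\<omega>\<in>space M. h (X \<omega>) (S \<omega>) = k} \<inter> {\<omega>\<in>space M. S \<omega> = s})" for s
    using ae by (intro measure_eq_AE) auto
  then show "unfair M X S g k = unfair M X S h k"
    unfolding unfair_def cond_prob_def by simp
qed

end

locale continuous_fair_classification = fair_classification +
  assumes continuity: "continuity_assumption M X S K p"
begin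

lemma tie_set_null:
  assumes k: "k \<in> {1..K}" and j: "j \<in> {1..K}" and "k \<noteq> j" and s: "s \<in> {-1, 1}"
  shows "{\<omega>\<in>space M. p k (X \<omega>) (S \<omega>) - p j (X \<omega>) (S \<omega>) = c} \<inter> {\<omega>\<in>space M. S \<omega> = s} \<in> null_sets M"
proof (rule level_set_null_if_isCont)
  show "(\<lambda>\<omega>. p k (X \<omega>) (S \<omega>) - p j (X \<omega>) (S \<omega>)) \<in> borel_measurable M"
    using k j by measurable
  show "{\<omega>\<in>space M. S \<omega> = s} \<in> sets M"
    by measurable
  let ?F = "\<lambda>t. cond_prob M S s {\<omega>\<in>space M. p k (X \<omega>) (S \<omega>) - p j (X \<omega>) (S \<omega>) \<le> t}"
  have "continuous_on UNIV ?F"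
    using continuity assms unfolding continuity_assumption_def by blast
  then have "isCont ?F c"
    by (simp add: continuous_on_eq_continuous_at)
  then have "isCont (\<lambda>t. piS M S s * ?F t) c"
    by (intro continuous_intros)
  then show "isCont (\<lambda>t. measure M ({\<omega>\<in>space M. p k (X \<omega>) (S \<omega>) - p j (X \<omega>) (S \<omega>) \<le> t}
      \<inter> {\<omega>\<in>space M. S \<omega> = s})) c"
    using piS_pos[OF s] by (simp add: cond_prob_def)
qed

lemma AE_scores_distinct:
  "AE \<omega> in M. \<forall>k\<in>{1..K}. \<forall>j\<in>{1..K}. k \<noteq> j \<longrightarrow>
    score M S p l1 l2 k (X \<omega>) (S \<omega>) \<noteq> score M S p l1 l2 j (X \<omega>) (S \<omega>)"
proof (intro AE_ball_countable[THEN iffD2] ballI countable_finite finite_atLeastAtMost)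
  fix k j assume k: "k \<in> {1..K}" and j: "j \<in> {1..K}"
  \<comment> \<open>on \<open>{S = s}\<close> the scores of \<open>k\<close> and \<open>j\<close> tie exactly where \<open>p k - p j = c s\<close>\<close>
  define c where "c s = of_int s * ((l1 k - l2 k) - (l1 j - l2 j)) / piS M S s" for s :: int
  let ?N = "\<lambda>s. {\<omega>\<in>space M. p k (X \<omega>) (S \<omega>) - p j (X \<omega>) (S \<omega>) = c s} \<inter> {\<omega>\<in>space M. S \<omega> = s}"
  show "AE \<omega> in M. k \<noteq> j \<longrightarrow> score M S p l1 l2 k (X \<omega>) (S \<omega>) \<noteq> score M S p l1 l2 j (X \<omega>) (S \<omega>)"
  proof (cases "k = j")
    case False
    have null: "?N s \<in> null_sets M" if "s \<in> {-1, 1}" for s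
      using tie_set_null[OF k j False that] .
    have "AE \<omega> in M. \<omega> \<notin> ?N 1" "AE \<omega> in M. \<omega> \<notin> ?N (-1)"
      by (intro AE_not_in null; simp)+
    with AE_space show ?thesis
    proof eventually_elim
      case (elim \<omega>)
      then have s: "S \<omega> \<in> {-1, 1}"
        using S_values by auto
      have "score M S p l1 l2 k (X \<omega>) (S \<omega>) \<noteq> score M S p l1 l2 j (X \<omega>) (S \<omega>)"
      proof
        assume "score M S p l1 l2 k (X \<omega>) (S \<omega>) = score M S p l1 l2 j (X \<omega>) (S \<omega>)"
        then have "p k (X \<omega>) (S \<omega>) - p j (X \<omega>) (S \<omega>) = c (S \<omega>)"
          using piS_pos[OF s] unfolding score_def c_def by (simp add: field_simps)
        then show False
          using elim s by auto
      qed
      then show ?case ..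
    qed
  qed simp
qed

lemma AE_eq_fair_argmax_if_fair_risk_le:
  assumes g0: "g0 \<in> classifiers K"
    and le: "fair_risk M X S Y K eps l1 l2 g0 \<le> fair_risk M X S Y K eps l1 l2 (fair_argmax M S p K l1 l2)"
  shows "AE \<omega> in M. g0 (X \<omega>) (S \<omega>) = fair_argmax M S p K l1 l2 (X \<omega>) (S \<omega>)"
proof -
  let ?g = "fair_argmax M S p K l1 l2"
  let ?score = "\<lambda>g x s. score M S p l1 l2 (g x s) x s"
  have cond_exp_eq: "cond_exp M S s (\<lambda>\<omega>. ?score g0 (X \<omega>) s) = cond_exp M S s (\<lambda>\<omega>. ?score ?g (X \<omega>) s)"
    if "s \<in> {-1, 1}" for s
    using le cond_exp_score_le_fair_argmax[OF g0, of 1 l1 l2] cond_exp_score_le_fair_argmax[OF g0, of "-1" l1 l2] that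
    unfolding fair_risk_eq_cond_exp_score[OF g0] fair_risk_eq_cond_exp_score[OF fair_argmax_classifier]
    by auto
  have AE_score_eq: "AE \<omega> in M. S \<omega> = s \<longrightarrow> ?score g0 (X \<omega>) s = ?score ?g (X \<omega>) s"
    if s: "s \<in> {-1, 1}" for s
    using integral_group_score(1)[OF g0 s] integral_group_score(1)[OF fair_argmax_classifier s]
      classifier_range[OF g0 s]
    by (intro AE_eq_if_cond_exp_eq[OF s _ _ _ cond_exp_eq[OF s]]) (auto intro: score_le_fair_argmax)
  have "AE \<omega> in M. S \<omega> = 1 \<longrightarrow> ?score g0 (X \<omega>) 1 = ?score ?g (X \<omega>) 1"
    "AE \<omega> in M. S \<omega> = -1 \<longrightarrow> ?score g0 (X \<omega>) (-1) = ?score ?g (X \<omega>) (-1)"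
    by (intro AE_score_eq; simp)+
  with AE_scores_distinct[of l1 l2] AE_space show ?thesis
  proof eventually_elim
    case (elim \<omega>)
    then have s: "S \<omega> \<in> {-1, 1}"
      using S_values by auto
    then have "?score g0 (X \<omega>) (S \<omega>) = ?score ?g (X \<omega>) (S \<omega>)"
      using elim by auto
    then show ?case
      using elim(1) classifier_range[OF g0 s] fair_argmax_range by blast
  qed
qed

lemma tendsto_unfair_fair_argmax:
  assumes lim1: "\<And>j. j \<in> {1..K} \<Longrightarrow> (\<lambda>n. m1 n j) \<longlonglongrightarrow> l1 j"
    and lim2: "\<And>j. j \<in> {1..K} \<Longrightarrow> (\<lambda>n. m2 n j) \<longlonglongrightarrow> l2 j"
  shows "(\<lambda>n. unfair M X S (fair_argmax M S p K (m1 n) (m2 n)) k) \<longlonglongrightarrow> unfair M X S (fair_argmax M S p K l1 l2) k"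
proof -
  let ?G = "\<lambda>n. fair_argmax M S p K (m1 n) (m2 n)" and ?g = "fair_argmax M S p K l1 l2"
  have eventually_eq: "AE \<omega> in M. eventually (\<lambda>n. ?G n (X \<omega>) (S \<omega>) = ?g (X \<omega>) (S \<omega>)) sequentially"
    using AE_scores_distinct[of l1 l2]
  proof eventually_elim
    case (elim \<omega>)
    show ?case
      unfolding fair_argmax_eq_least_argmax
    proof (rule eventually_least_argmax_eq)
      show "least_argmax {1..K} (\<lambda>k. score M S p l1 l2 k (X \<omega>) (S \<omega>)) \<in> {1..K}"
        using fair_argmax_range unfolding fair_argmax_eq_least_argmax .
      show "score M S p l1 l2 j (X \<omega>) (S \<omega>)
        < score M S p l1 l2 (least_argmax {1..K} (\<lambda>k. score M S p l1 l2 k (X \<omega>) (S \<omega>))) (X \<omega>) (S \<omega>)"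
        if "j \<in> {1..K}" "j \<noteq> least_argmax {1..K} (\<lambda>k. score M S p l1 l2 k (X \<omega>) (S \<omega>))" for j
        using that elim fair_argmax_range[of l1 l2 "X \<omega>" "S \<omega>"] score_le_fair_argmax[of j l1 l2 "X \<omega>" "S \<omega>"]
        unfolding fair_argmax_eq_least_argmax by (metis order_le_neq_trans)
      show "(\<lambda>n. score M S p (m1 n) (m2 n) j (X \<omega>) (S \<omega>)) \<longlonglongrightarrow> score M S p l1 l2 j (X \<omega>) (S \<omega>)"
        if "j \<in> {1..K}" for j
        unfolding score_def using that by (intro tendsto_intros lim1 lim2)
    qed simp
  qed
  have "(\<lambda>n. measure M {\<omega>\<in>space M. ?G n (X \<omega>) s = k \<and> S \<omega> = s})
      \<longlonglongrightarrow> measure M {\<omega>\<in>space M. ?g (X \<omega>) s = k \<and> S \<omega> = s}" if s: "s \<in> {-1, 1}" for s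
  proof (rule tendsto_measure_if_AE_eventually_eq)
    have [measurable]: "(\<lambda>\<omega>. f (X \<omega>) s) \<in> M \<rightarrow>\<^sub>M count_space UNIV" if "f \<in> classifiers K" for f
      using classifier_measurable_at[OF that s] .
    show "{\<omega>\<in>space M. ?G n (X \<omega>) s = k \<and> S \<omega> = s} \<in> sets M" for n
      using fair_argmax_classifier by measurable
    show "{\<omega>\<in>space M. ?g (X \<omega>) s = k \<and> S \<omega> = s} \<in> sets M"
      using fair_argmax_classifier by measurable
    show "AE \<omega> in M. eventually (\<lambda>n. \<omega> \<in> {\<omega>\<in>space M. ?G n (X \<omega>) s = k \<and> S \<omega> = s}
        \<longleftrightarrow> \<omega> \<in> {\<omega>\<in>space M. ?g (X \<omega>) s = k \<and> S \<omega> = s}) sequentially"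
      using eventually_eq by eventually_elim (auto elim: eventually_mono)
  qed
  then show ?thesis
    unfolding unfair_eq using piS_pos[of 1] piS_pos[of "-1"] by (intro tendsto_diff tendsto_divide tendsto_const) auto
qed

lemma unfair_fair_argmax_directional_bounds:
  fixes t :: "nat \<Rightarrow> real" and c :: real
  assumes Hle: "\<And>n. Hfun M X S p K eps l1 l2 \<le> Hfun M X S p K eps (m1 n) (m2 n)"
    and lim1: "\<And>j. j \<in> {1..K} \<Longrightarrow> (\<lambda>n. m1 n j) \<longlonglongrightarrow> l1 j"
    and lim2: "\<And>j. j \<in> {1..K} \<Longrightarrow> (\<lambda>n. m2 n j) \<longlonglongrightarrow> l2 j"
    and shift: "\<And>n g. g \<in> classifiers K \<Longrightarrow> fair_risk M X S Y K eps (m1 n) (m2 n) g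
      = fair_risk M X S Y K eps l1 l2 g + t n * (c * unfair M X S g k - eps)"
  shows "(\<And>n. 0 < t n) \<Longrightarrow> c * unfair M X S (fair_argmax M S p K l1 l2) k \<le> eps"
    and "(\<And>n. t n < 0) \<Longrightarrow> eps \<le> c * unfair M X S (fair_argmax M S p K l1 l2) k"
proof -
  define d where "d n = c * unfair M X S (fair_argmax M S p K (m1 n) (m2 n)) k - eps" for n
  have product_nonpos: "t n * d n \<le> 0" for n
    using fair_risk_le_if_Hfun_le[OF Hle[of n]] shift[OF fair_argmax_classifier, of n]
    unfolding d_def by simp
  have lim: "d \<longlonglongrightarrow> c * unfair M X S (fair_argmax M S p K l1 l2) k - eps"
    unfolding d_def by (intro tendsto_intros tendsto_unfair_fair_argmax lim1 lim2)
  show "c * unfair M X S (fair_argmax M S p K l1 l2) k \<le> eps" if "\<And>n. 0 < t n"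
  proof -
    have "d n \<le> 0" for n
      using product_nonpos[of n] that[of n] by (simp add: mult_le_0_iff)
    then show ?thesis
      using LIMSEQ_le_const2[OF lim, of 0] by auto
  qed
  show "eps \<le> c * unfair M X S (fair_argmax M S p K l1 l2) k" if "\<And>n. t n < 0"
  proof -
    have "0 \<le> d n" for n
      using product_nonpos[of n] that[of n] by (simp add: mult_le_0_iff)
    then show ?thesis
      using LIMSEQ_le_const[OF lim, of 0] by auto
  qed
qed

end

locale fair_duality = continuous_fair_classification +
  fixes eps :: real and l1 l2 :: "nat \<Rightarrow> real"
  assumes l1_nonneg: "nonneg_vec K l1" and l2_nonneg: "nonneg_vec K l2"
    and Hfun_minimal: "\<forall>m1 m2. nonneg_vec K m1 \<and> nonneg_vec K m2 \<longrightarrow>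
      Hfun M X S p K eps l1 l2 \<le> Hfun M X S p K eps m1 m2"
begin

abbreviation g_star where
  "g_star \<equiv> fair_argmax M S p K l1 l2"

lemma unfair_g_star_l1_conditions:
  assumes k: "k \<in> {1..K}"
  shows "unfair M X S g_star k \<le> eps"
    and "0 < l1 k \<Longrightarrow> eps \<le> unfair M X S g_star k"
proof -
  have l1k: "0 \<le> l1 k"
    using l1_nonneg k by (simp add: nonneg_vec_def)
  define m1 where "m1 a n = l1(k := l1 k + a * inverse (real (Suc n)))" for a n
  have Hle: "Hfun M X S p K eps l1 l2 \<le> Hfun M X S p K eps (m1 a n) l2" if "- l1 k \<le> a" for a n
    using Hfun_minimal l2_nonneg nonneg_vec_update[OF l1_nonneg nonneg_add_scaled_inverse_Suc[OF l1k that]]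
    unfolding m1_def by blast
  have lim: "(\<lambda>n. m1 a n j) \<longlonglongrightarrow> l1 j" for a j
    unfolding m1_def using tendsto_mult_right_zero[OF LIMSEQ_inverse_real_of_nat, of a]
    by (rule tendsto_fun_upd_add)
  have shift: "fair_risk M X S Y K eps (m1 a n) l2 g
      = fair_risk M X S Y K eps l1 l2 g + a * inverse (real (Suc n)) * (1 * unfair M X S g k - eps)" for a n g
    unfolding m1_def fair_risk_update_l1[OF k] by simp
  show "unfair M X S g_star k \<le> eps"
    using unfair_fair_argmax_directional_bounds(1)[OF Hle lim tendsto_const shift, of 1] l1k by simp
  show "eps \<le> unfair M X S g_star k" if "0 < l1 k"
    using unfair_fair_argmax_directional_bounds(2)[OF Hle lim tendsto_const shift, of "- l1 k"] that by simp
qed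

lemma unfair_g_star_l2_conditions:
  assumes k: "k \<in> {1..K}"
  shows "- unfair M X S g_star k \<le> eps"
    and "0 < l2 k \<Longrightarrow> eps \<le> - unfair M X S g_star k"
proof -
  have l2k: "0 \<le> l2 k"
    using l2_nonneg k by (simp add: nonneg_vec_def)
  define m2 where "m2 a n = l2(k := l2 k + a * inverse (real (Suc n)))" for a n
  have Hle: "Hfun M X S p K eps l1 l2 \<le> Hfun M X S p K eps l1 (m2 a n)" if "- l2 k \<le> a" for a n
    using Hfun_minimal l1_nonneg nonneg_vec_update[OF l2_nonneg nonneg_add_scaled_inverse_Suc[OF l2k that]]
    unfolding m2_def by blast
  have lim: "(\<lambda>n. m2 a n j) \<longlonglongrightarrow> l2 j" for a j
    unfolding m2_def using tendsto_mult_right_zero[OF LIMSEQ_inverse_real_of_nat, of a]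
    by (rule tendsto_fun_upd_add)
  have shift: "fair_risk M X S Y K eps l1 (m2 a n) g
      = fair_risk M X S Y K eps l1 l2 g + a * inverse (real (Suc n)) * (- 1 * unfair M X S g k - eps)" for a n g
    unfolding m2_def fair_risk_update_l2[OF k] by simp
  show "- unfair M X S g_star k \<le> eps"
    using unfair_fair_argmax_directional_bounds(1)[OF Hle tendsto_const lim shift, of 1] l2k by simp
  show "eps \<le> - unfair M X S g_star k" if "0 < l2 k"
    using unfair_fair_argmax_directional_bounds(2)[OF Hle tendsto_const lim shift, of "- l2 k"] that by simp
qed

lemma g_star_eps_fair: "g_star \<in> eps_fair M X S K eps"
  unfolding eps_fair_def
  using fair_argmax_classifier unfair_g_star_l1_conditions(1) unfair_g_star_l2_conditions(1)
  by (auto simp: abs_le_iff)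

lemma fair_risk_g_star_eq_risk: "fair_risk M X S Y K eps l1 l2 g_star = risk M X S Y g_star"
proof -
  have slack: "l1 k * (unfair M X S g_star k - eps) = 0" "l2 k * (- unfair M X S g_star k - eps) = 0"
    if k: "k \<in> {1..K}" for k
    using unfair_g_star_l1_conditions[OF k] unfair_g_star_l2_conditions[OF k] l1_nonneg l2_nonneg k
    by (fastforce simp: nonneg_vec_def less_eq_real_def)+
  have "(\<Sum>k\<in>{1..K}. l1 k * (unfair M X S g_star k - eps)) = 0"
    "(\<Sum>k\<in>{1..K}. l2 k * (- unfair M X S g_star k - eps)) = 0"
    using slack by (intro sum.neutral ballI; simp)+
  then show ?thesis
    unfolding fair_risk_def by simp
qed

lemma fair_risk_le_risk:
  assumes g: "g \<in> eps_fair M X S K eps"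
  shows "fair_risk M X S Y K eps l1 l2 g \<le> risk M X S Y g"
proof -
  have D: "\<bar>unfair M X S g k\<bar> \<le> eps" if "k \<in> {1..K}" for k
    using g that unfolding eps_fair_def by blast
  have "(\<Sum>k\<in>{1..K}. l1 k * (unfair M X S g k - eps)) \<le> 0"
    "(\<Sum>k\<in>{1..K}. l2 k * (- unfair M X S g k - eps)) \<le> 0"
    using l1_nonneg l2_nonneg D unfolding nonneg_vec_def
    by (intro sum_nonpos mult_nonneg_nonpos; force simp: abs_le_iff)+
  then show ?thesis
    unfolding fair_risk_def by linarith
qed

lemma g_star_risk_optimal:
  assumes g: "g \<in> eps_fair M X S K eps"
  shows "risk M X S Y g_star \<le> risk M X S Y g"
proof -
  have "risk M X S Y g_star = fair_risk M X S Y K eps l1 l2 g_star"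
    by (rule fair_risk_g_star_eq_risk[symmetric])
  also have "\<dots> \<le> fair_risk M X S Y K eps l1 l2 g"
    using g unfolding eps_fair_def by (intro fair_argmax_minimises_fair_risk) blast
  also have "\<dots> \<le> risk M X S Y g"
    using fair_risk_le_risk[OF g] .
  finally show ?thesis .
qed

lemma eps_fair_optimal_iff_fair_risk_optimal:
  "(g0 \<in> eps_fair M X S K eps \<and> (\<forall>g\<in>eps_fair M X S K eps. risk M X S Y g0 \<le> risk M X S Y g))
    \<longleftrightarrow> (g0 \<in> classifiers K \<and> (\<forall>g\<in>classifiers K.
          fair_risk M X S Y K eps l1 l2 g0 \<le> fair_risk M X S Y K eps l1 l2 g))"
proof
  assume opt: "g0 \<in> eps_fair M X S K eps \<and> (\<forall>g\<in>eps_fair M X S K eps. risk M X S Y g0 \<le> risk M X S Y g)"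
  have "fair_risk M X S Y K eps l1 l2 g0 \<le> fair_risk M X S Y K eps l1 l2 g" if "g \<in> classifiers K" for g
  proof -
    have "fair_risk M X S Y K eps l1 l2 g0 \<le> risk M X S Y g0"
      using opt fair_risk_le_risk by blast
    also have "\<dots> \<le> risk M X S Y g_star"
      using opt g_star_eps_fair by blast
    also have "\<dots> = fair_risk M X S Y K eps l1 l2 g_star"
      by (rule fair_risk_g_star_eq_risk[symmetric])
    also have "\<dots> \<le> fair_risk M X S Y K eps l1 l2 g"
      using fair_argmax_minimises_fair_risk[OF that] .
    finally show ?thesis .
  qed
  with opt show "g0 \<in> classifiers K \<and> (\<forall>g\<in>classifiers K.
      fair_risk M X S Y K eps l1 l2 g0 \<le> fair_risk M X S Y K eps l1 l2 g)"
    unfolding eps_fair_def by blast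
next
  assume opt: "g0 \<in> classifiers K \<and> (\<forall>g\<in>classifiers K.
      fair_risk M X S Y K eps l1 l2 g0 \<le> fair_risk M X S Y K eps l1 l2 g)"
  then have g0: "g0 \<in> classifiers K"
    by blast
  have ae: "AE \<omega> in M. g0 (X \<omega>) (S \<omega>) = g_star (X \<omega>) (S \<omega>)"
    using opt fair_argmax_classifier by (intro AE_eq_fair_argmax_if_fair_risk_le[OF g0]) blast
  have "g0 \<in> eps_fair M X S K eps"
    using g_star_eps_fair g0 unfair_AE_cong[OF g0 fair_argmax_classifier ae] unfolding eps_fair_def by simp
  moreover have "risk M X S Y g0 \<le> risk M X S Y g" if "g \<in> eps_fair M X S K eps" for g
    using g_star_risk_optimal[OF that] risk_AE_cong[OF g0 fair_argmax_classifier ae] by simp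
  ultimately show "g0 \<in> eps_fair M X S K eps \<and> (\<forall>g\<in>eps_fair M X S K eps. risk M X S Y g0 \<le> risk M X S Y g)"
    by blast
qed

end

theorem proposition2:
  fixes M :: "'a measure" and X :: "'a \<Rightarrow> 'x::euclidean_space"
    and S :: "'a \<Rightarrow> int" and Y :: "'a \<Rightarrow> nat"
    and K :: nat and eps :: real and p :: "nat \<Rightarrow> 'x \<Rightarrow> int \<Rightarrow> real"
    and l1 l2 :: "nat \<Rightarrow> real"
  assumes "prob_space M"
    and "X \<in> borel_measurable M"
    and "S \<in> M \<rightarrow>\<^sub>M count_space UNIV"
    and "Y \<in> M \<rightarrow>\<^sub>M count_space UNIV"
    and "\<forall>\<omega>\<in>space M. S \<omega> \<in> {-1, 1}"
    and "\<forall>\<omega>\<in>space M. Y \<omega> \<in> {1..K}"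
    and "\<forall>s\<in>{-1, 1::int}. piS M S s > 0"
    and "is_cond_prob_version M X S Y K p"
    and "0 \<le> eps"
    and "continuity_assumption M X S K p"
    and "nonneg_vec K l1" and "nonneg_vec K l2"
    and "\<forall>m1 m2. nonneg_vec K m1 \<and> nonneg_vec K m2 \<longrightarrow>
           Hfun M X S p K eps l1 l2 \<le> Hfun M X S p K eps m1 m2"
  shows "(\<forall>g0. (g0 \<in> eps_fair M X S K eps \<and>
                 (\<forall>g\<in>eps_fair M X S K eps. risk M X S Y g0 \<le> risk M X S Y g))
            \<longleftrightarrow> (g0 \<in> classifiers K \<and>
                 (\<forall>g\<in>classifiers K. fair_risk M X S Y K eps l1 l2 g0
                                      \<le> fair_risk M X S Y K eps l1 l2 g)))
         \<and> fair_argmax M S p K l1 l2 \<in> eps_fair M X S K eps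
         \<and> (\<forall>g\<in>eps_fair M X S K eps.
              risk M X S Y (fair_argmax M S p K l1 l2) \<le> risk M X S Y g)"
proof -
  interpret fair_duality M X S Y K p eps l1 l2
    using assms
    by (simp add: fair_duality_def fair_duality_axioms_def continuous_fair_classification_def
        continuous_fair_classification_axioms_def fair_classification_def fair_classification_axioms_def)
  show ?thesis
    using eps_fair_optimal_iff_fair_risk_optimal g_star_eps_fair g_star_risk_optimal by blast
qed

end
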